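(* Pruned multiplication is an associative operation on $T^1(\Sigma)$. The unary operations $*$ and $+$ on $T^1(\Sigma)$ are idempotent, and the subsemigroup of $T^1(\Sigma)$ generated by their images is commutative.
   Context: Let $\Sigma$ be a set. A $\Sigma$-tree is a finite directed graph whose underlying undirected graph is a tree, edges labelled by elements of $\Sigma$, with distinguished start and end vertices such that there is a (possibly empty) directed path from start to end vertex. A morphism $X\to Y$ maps vertices to vertices and edges to edges, preserving initial vertex, terminal vertex and label of each edge, and mapping start/end vertex to start/end vertex; isomorphisms are morphisms bijective on vertices and edges. A retraction is an idempotent morphism $X\to X$, its image a retract; $X$ is pruned if it admits no non-identity retraction. Every tree $X$ has a pruned retract, unique up to isomorphism, whose isomorphism type is $\overline{X}$. $T^1(\Sigma)$ is the set of isomorphism types of pruned $\Sigma$-trees. Unpruned operations: $X\times Y$ identifies the end vertex of (a copy of) $X$ with the start vertex of (a disjoint copy of) $Y$, start vertex that of $X$, end vertex that of $Y$; $X^{(+)}$ is $X$ with end vertex moved to the start vertex; $X^{( * )}$ is $X$ with start vertex moved to the end vertex. Pruned operations on $T^1(\Sigma)$: $XY=\overline{X\times Y}$, $X^+=\overline{X^{(+)}}$, $X^*=\overline{X^{( * )}}$. *)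

theory Defs
  imports Main
begin

text \<open>Vertices are natural numbers (every finite tree has an isomorphic
copy of this form); an edge is a triple (initial vertex, label, terminal vertex).
Since the underlying undirected graph is a tree there are no parallel edges, so
edges are determined by such triples.\<close>

record 's stree =
  verts :: "nat set"
  arcs  :: "(nat \<times> 's \<times> nat) set"
  st    :: nat
  en    :: nat

definition dedges :: "'s stree \<Rightarrow> (nat \<times> nat) set" where
  "dedges X = {(u, v). \<exists>a. (u, a, v) \<in> arcs X}"

definition uedges :: "'s stree \<Rightarrow> (nat \<times> nat) set" where
  "uedges X = dedges X \<union> (dedges X)\<inverse>"

definition sigma_tree :: "'s set \<Rightarrow> 's stree \<Rightarrow> bool" where
  "sigma_tree Sig X \<longleftrightarrow>
     finite (verts X) \<and> finite (arcs X) \<and>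
     (\<forall>(u, a, v) \<in> arcs X. u \<in> verts X \<and> a \<in> Sig \<and> v \<in> verts X) \<and>
     (\<forall>u \<in> verts X. \<forall>v \<in> verts X. (u, v) \<in> (uedges X)\<^sup>*) \<and>
     card (arcs X) + 1 = card (verts X) \<and>
     st X \<in> verts X \<and> en X \<in> verts X \<and>
     (st X, en X) \<in> (dedges X)\<^sup>*"

definition emap :: "(nat \<Rightarrow> nat) \<Rightarrow> nat \<times> 's \<times> nat \<Rightarrow> nat \<times> 's \<times> nat" where
  "emap f = (\<lambda>(u, a, v). (f u, a, f v))"

definition morphism :: "'s stree \<Rightarrow> 's stree \<Rightarrow> (nat \<Rightarrow> nat) \<Rightarrow> bool" where
  "morphism X Y f \<longleftrightarrow>
     (\<forall>v \<in> verts X. f v \<in> verts Y) \<and>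
     (\<forall>e \<in> arcs X. emap f e \<in> arcs Y) \<and>
     f (st X) = st Y \<and> f (en X) = en Y"

definition iso :: "'s stree \<Rightarrow> 's stree \<Rightarrow> (nat \<Rightarrow> nat) \<Rightarrow> bool" where
  "iso X Y f \<longleftrightarrow> morphism X Y f \<and> bij_betw f (verts X) (verts Y) \<and>
     bij_betw (emap f) (arcs X) (arcs Y)"

definition isomorphic :: "'s stree \<Rightarrow> 's stree \<Rightarrow> bool" where
  "isomorphic X Y \<longleftrightarrow> (\<exists>f. iso X Y f)"

definition retraction :: "'s stree \<Rightarrow> (nat \<Rightarrow> nat) \<Rightarrow> bool" where
  "retraction X f \<longleftrightarrow> morphism X X f \<and> (\<forall>v \<in> verts X. f (f v) = f v)"

definition img :: "'s stree \<Rightarrow> (nat \<Rightarrow> nat) \<Rightarrow> 's stree" where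
  "img X f = \<lparr>verts = f ` verts X, arcs = emap f ` arcs X, st = f (st X), en = f (en X)\<rparr>"

definition retract_of :: "'s stree \<Rightarrow> 's stree \<Rightarrow> bool" where
  "retract_of R X \<longleftrightarrow> (\<exists>f. retraction X f \<and> R = img X f)"

definition pruned :: "'s stree \<Rightarrow> bool" where
  "pruned X \<longleftrightarrow> (\<forall>f. retraction X f \<longrightarrow> (\<forall>v \<in> verts X. f v = v))"

definition prune :: "'s stree \<Rightarrow> 's stree" where
  "prune X = (SOME R. retract_of R X \<and> pruned R)"

definition iso_type :: "'s set \<Rightarrow> 's stree \<Rightarrow> 's stree set" where
  "iso_type Sig X = {Y. sigma_tree Sig Y \<and> isomorphic X Y}"

definition T1 :: "'s set \<Rightarrow> 's stree set set" where
  "T1 Sig = {iso_type Sig X | X. sigma_tree Sig X \<and> pruned X}"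

definition rep :: "'s stree set \<Rightarrow> 's stree" where
  "rep A = (SOME X. X \<in> A)"

text \<open>Unpruned operations. In the product, X is copied to even numbers, Y to odd
numbers, except that the start vertex of Y is identified with the end vertex of X.\<close>
definition tprod :: "'s stree \<Rightarrow> 's stree \<Rightarrow> 's stree" where
  "tprod X Y = (let g = (\<lambda>v. 2 * v);
                    h = (\<lambda>v. if v = st Y then 2 * en X else 2 * v + 1)
                in \<lparr>verts = g ` verts X \<union> h ` verts Y,
                    arcs = emap g ` arcs X \<union> emap h ` arcs Y,
                    st = g (st X), en = h (en Y)\<rparr>)"

definition tplus :: "'s stree \<Rightarrow> 's stree" where
  "tplus X = X\<lparr>en := st X\<rparr>"

definition tstar :: "'s stree \<Rightarrow> 's stree" where
  "tstar X = X\<lparr>st := en X\<rparr>"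

definition pmult :: "'s set \<Rightarrow> 's stree set \<Rightarrow> 's stree set \<Rightarrow> 's stree set" where
  "pmult Sig A B = iso_type Sig (prune (tprod (rep A) (rep B)))"

definition pplus :: "'s set \<Rightarrow> 's stree set \<Rightarrow> 's stree set" where
  "pplus Sig A = iso_type Sig (prune (tplus (rep A)))"

definition pstar :: "'s set \<Rightarrow> 's stree set \<Rightarrow> 's stree set" where
  "pstar Sig A = iso_type Sig (prune (tstar (rep A)))"

inductive_set gen_starplus :: "'s set \<Rightarrow> 's stree set set" for Sig where
  gen_star: "A \<in> T1 Sig \<Longrightarrow> pstar Sig A \<in> gen_starplus Sig"
| gen_plus: "A \<in> T1 Sig \<Longrightarrow> pplus Sig A \<in> gen_starplus Sig"
| gen_mult: "a \<in> gen_starplus Sig \<Longrightarrow> b \<in> gen_starplus Sig \<Longrightarrow> pmult Sig a b \<in> gen_starplus Sig"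

end

theory Submission
  imports Defs
begin

text \<open>
  Write \<open>X \<rightarrow> Y\<close> if there is a morphism from \<open>X\<close> to \<open>Y\<close>. Some power of an
  endomorphism of a finite tree is idempotent, i.e. a retraction, so every endomorphism of a
  pruned tree is bijective; hence pruned trees with \<open>X \<rightarrow> Y \<rightarrow> X\<close> are isomorphic. As a tree
  and its pruned retract map into each other, the pruned type of \<open>X\<close> only depends on \<open>X\<close> up
  to maps in both directions. Up to such maps the unpruned product is monotone and associative,
  and it is commutative on trees whose start and end vertex coincide. These are exactly the
  trees fixed by \<open>(+)\<close> and \<open>(*)\<close>, and pruning preserves them, which gives idempotency and
  commutativity.
\<close>

lemma emap_apply [simp]: "emap f (u, a, v) = (f u, a, f v)"
  by (simp add: emap_def)

lemma emap_comp: "emap (g \<circ> f) = emap g \<circ> emap f"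
  by (auto simp: emap_def fun_eq_iff)

lemma emap_id [simp]: "emap id = id"
  by (simp add: emap_def fun_eq_iff)

lemma inj_emap: "inj f \<Longrightarrow> inj (emap f)"
  by (auto simp: inj_def emap_def)

lemma rtrancl_map:
  assumes "\<And>x y. (x, y) \<in> R \<Longrightarrow> (f x, f y) \<in> S" and "(x, y) \<in> R\<^sup>*"
  shows "(f x, f y) \<in> S\<^sup>*"
  using assms(2) by induction (auto intro: rtrancl_into_rtrancl assms(1))

lemma dedges_rtrancl_map:
  "emap f ` arcs X \<subseteq> arcs Y \<Longrightarrow> (u, v) \<in> (dedges X)\<^sup>* \<Longrightarrow> (f u, f v) \<in> (dedges Y)\<^sup>*"
  by (erule rtrancl_map[rotated]) (force simp: dedges_def)

lemma uedges_rtrancl_map: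
  "emap f ` arcs X \<subseteq> arcs Y \<Longrightarrow> (u, v) \<in> (uedges X)\<^sup>* \<Longrightarrow> (f u, f v) \<in> (uedges Y)\<^sup>*"
  by (erule rtrancl_map[rotated]) (force simp: uedges_def dedges_def)

lemma sigma_treeD:
  assumes "sigma_tree Sig X"
  shows "finite (verts X)" "finite (arcs X)" "st X \<in> verts X" "en X \<in> verts X"
    "card (arcs X) + 1 = card (verts X)"
    "\<forall>u \<in> verts X. \<forall>v \<in> verts X. (u, v) \<in> (uedges X)\<^sup>*"
    "(u, a, v) \<in> arcs X \<Longrightarrow> u \<in> verts X \<and> a \<in> Sig \<and> v \<in> verts X"
    "(st X, en X) \<in> (dedges X)\<^sup>*"
  using assms unfolding sigma_tree_def by auto

subsection \<open>Counting vertices and arcs\<close>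

lemma ex_descent_to_root:
  assumes conn: "\<forall>u \<in> verts X. \<forall>v \<in> verts X. (u, v) \<in> (uedges X)\<^sup>*" and r: "r \<in> verts X"
  shows "\<exists>q (d :: nat \<Rightarrow> nat). \<forall>v \<in> verts X - {r}. (v, q v) \<in> uedges X \<and> d (q v) < d v"
proof -
  define d where "d v = (LEAST n. (v, r) \<in> uedges X ^^ n)" for v
  have "\<exists>w. (v, w) \<in> uedges X \<and> d w < d v" if v: "v \<in> verts X - {r}" for v
  proof -
    obtain n where "(v, r) \<in> uedges X ^^ n"
      using conn v r rtrancl_power by blast
    then have dv: "(v, r) \<in> uedges X ^^ d v"
      unfolding d_def by (rule LeastI)
    with v obtain m where m: "d v = Suc m"
      by (cases "d v") auto
    with dv obtain w where "(v, w) \<in> uedges X" "(w, r) \<in> uedges X ^^ m"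
      using relpow_Suc_D2 by metis
    moreover from this(2) have "d w \<le> m"
      unfolding d_def by (rule Least_le)
    ultimately show ?thesis
      using m by auto
  qed
  then show ?thesis
    by metis
qed

definition arc_ends :: "nat \<times> 's \<times> nat \<Rightarrow> nat set" where
  "arc_ends e = {fst e, snd (snd e)}"

lemma ex_inj_parent_arc:
  assumes "\<forall>u \<in> verts X. \<forall>v \<in> verts X. (u, v) \<in> (uedges X)\<^sup>*" and "r \<in> verts X"
  shows "\<exists>p. inj_on p (verts X - {r}) \<and>
    (\<forall>v \<in> verts X - {r}. p v \<in> arcs X \<and> v \<in> arc_ends (p v) \<and> fst (p v) \<noteq> snd (snd (p v)))"
proof -
  obtain q and d :: "nat \<Rightarrow> nat"
    where q: "\<And>v. v \<in> verts X - {r} \<Longrightarrow> (v, q v) \<in> uedges X \<and> d (q v) < d v"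
    using ex_descent_to_root[OF assms] by blast
  define p where "p v = (SOME e. e \<in> arcs X \<and> arc_ends e = {v, q v})" for v
  have p: "p v \<in> arcs X \<and> arc_ends (p v) = {v, q v}" if "v \<in> verts X - {r}" for v
  proof -
    have "\<exists>e. e \<in> arcs X \<and> arc_ends e = {v, q v}"
      using q[OF that] by (force simp: uedges_def dedges_def arc_ends_def)
    then show ?thesis
      unfolding p_def by (rule someI_ex)
  qed
  have "inj_on p (verts X - {r})"
  proof (rule inj_onI)
    fix v w assume v: "v \<in> verts X - {r}" and w: "w \<in> verts X - {r}" and "p v = p w"
    then have "{v, q v} = {w, q w}"
      using p by metis
    then show "v = w"
      using q[OF v] q[OF w] by (metis doubleton_eq_iff less_asym)
  qed
  moreover have "p v \<in> arcs X \<and> v \<in> arc_ends (p v) \<and> fst (p v) \<noteq> snd (snd (p v))"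
    if "v \<in> verts X - {r}" for v
  proof -
    have "v \<noteq> q v"
      using q[OF that] by auto
    then show ?thesis
      using p[OF that] by (auto simp: arc_ends_def doubleton_eq_iff)
  qed
  ultimately show ?thesis
    by (intro exI[of _ p] conjI ballI) auto
qed

lemma sigma_tree_no_loop:
  assumes X: "sigma_tree Sig X"
  shows "(u, a, u) \<notin> arcs X"
proof
  assume loop: "(u, a, u) \<in> arcs X"
  obtain p where p: "inj_on p (verts X - {st X})"
    "\<forall>v \<in> verts X - {st X}. p v \<in> arcs X \<and> fst (p v) \<noteq> snd (snd (p v))"
    using ex_inj_parent_arc[OF sigma_treeD(6,3)[OF X]] by blast
  have "p ` (verts X - {st X}) \<subseteq> arcs X - {(u, a, u)}"
    using p(2) by force
  then have "card (verts X - {st X}) \<le> card (arcs X - {(u, a, u)})"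
    using p(1) sigma_treeD(2)[OF X] by (metis card_image card_mono finite_Diff)
  moreover have "0 < card (arcs X)"
    using loop sigma_treeD(2)[OF X] card_gt_0_iff by blast
  ultimately show False
    using sigma_treeD(3,5)[OF X] loop by (simp add: card_Diff_singleton)
qed

text \<open>Parent arcs towards a root in \<open>R\<close> of the vertices outside \<open>R\<close> are distinct arcs outside
  \<open>R\<close>; this bounds the arcs of \<open>R\<close> from above, and parent arcs inside \<open>R\<close> bound them from below.\<close>

lemma card_connected_subgraph:
  assumes X: "sigma_tree Sig X" and sub: "verts R \<subseteq> verts X" "arcs R \<subseteq> arcs X"
    and ends: "\<forall>(u, a, v) \<in> arcs R. u \<in> verts R \<and> v \<in> verts R"
    and r: "r \<in> verts R"
    and conn: "\<forall>u \<in> verts R. \<forall>v \<in> verts R. (u, v) \<in> (uedges R)\<^sup>*"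
  shows "card (arcs R) + 1 = card (verts R)"
proof -
  have fin: "finite (verts X)" "finite (arcs X)" "finite (verts R)" "finite (arcs R)"
    using sigma_treeD(1,2)[OF X] sub finite_subset by auto
  obtain p where p: "inj_on p (verts X - {r})"
    "\<forall>v \<in> verts X - {r}. p v \<in> arcs X \<and> v \<in> arc_ends (p v)"
    using ex_inj_parent_arc[OF sigma_treeD(6)[OF X]] r sub by blast
  have "arc_ends e \<subseteq> verts R" if "e \<in> arcs R" for e
    using ends that by (cases e) (auto simp: arc_ends_def)
  then have "p ` (verts X - verts R) \<subseteq> arcs X - arcs R"
    using p(2) r by blast
  moreover have "inj_on p (verts X - verts R)"
    by (rule inj_on_subset[OF p(1)]) (use r in auto)
  ultimately have "card (verts X - verts R) \<le> card (arcs X - arcs R)"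
    using fin by (metis card_image card_mono finite_Diff)
  then have arcs_le: "card (arcs R) + 1 \<le> card (verts R)"
    using sub fin sigma_treeD(5)[OF X] card_mono[of "verts X" "verts R"]
      card_mono[of "arcs X" "arcs R"]
    by (simp add: card_Diff_subset)
  obtain q where q: "inj_on q (verts R - {r})" "\<forall>v \<in> verts R - {r}. q v \<in> arcs R"
    using ex_inj_parent_arc[OF conn r] by blast
  then have "card (verts R - {r}) \<le> card (arcs R)"
    using fin by (metis card_image card_mono image_subsetI)
  then show ?thesis
    using arcs_le r fin by (simp add: card_Diff_singleton)
qed

subsection \<open>Morphisms and isomorphisms\<close>

definition graph_morphism :: "'s stree \<Rightarrow> 's stree \<Rightarrow> (nat \<Rightarrow> nat) \<Rightarrow> bool" where
  "graph_morphism X Y f \<longleftrightarrow> f ` verts X \<subseteq> verts Y \<and> emap f ` arcs X \<subseteq> arcs Y"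

lemma morphism_iff_graph_morphism:
  "morphism X Y f \<longleftrightarrow> graph_morphism X Y f \<and> f (st X) = st Y \<and> f (en X) = en Y"
  by (auto simp: morphism_def graph_morphism_def)

lemma graph_morphism_comp:
  "graph_morphism X Y f \<Longrightarrow> graph_morphism Y Z g \<Longrightarrow> graph_morphism X Z (g \<circ> f)"
  unfolding graph_morphism_def emap_comp image_comp[symmetric] by (meson image_mono order_trans)

lemma morphism_comp: "morphism X Y f \<Longrightarrow> morphism Y Z g \<Longrightarrow> morphism X Z (g \<circ> f)"
  by (auto simp: morphism_iff_graph_morphism graph_morphism_comp)

lemma morphism_id: "morphism X X id"
  by (simp add: morphism_def emap_def)

lemma morphism_funpow: "morphism X X h \<Longrightarrow> morphism X X (h ^^ n)"
  by (induction n) (auto intro: morphism_comp morphism_id)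

lemma iso_if_bij_morphism:
  assumes X: "sigma_tree Sig X" and Y: "sigma_tree Sig Y" and f: "morphism X Y f"
    and bij: "bij_betw f (verts X) (verts Y)"
  shows "iso X Y f"
proof -
  have inj: "inj_on (emap f) (arcs X)"
  proof (rule inj_onI)
    fix e e' assume "e \<in> arcs X" "e' \<in> arcs X" "emap f e = emap f e'"
    moreover obtain u a v u' a' v' where "e = (u, a, v)" "e' = (u', a', v')"
      by (metis prod.exhaust)
    ultimately show "e = e'"
      using sigma_treeD(7)[OF X] bij by (auto simp: bij_betw_def inj_on_def)
  qed
  have "card (emap f ` arcs X) = card (arcs Y)"
    using card_image[OF inj] sigma_treeD(5)[OF X] sigma_treeD(5)[OF Y] bij_betw_same_card[OF bij]
    by simp
  then have "emap f ` arcs X = arcs Y"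
    using f sigma_treeD(2)[OF Y]
    by (simp add: card_subset_eq morphism_iff_graph_morphism graph_morphism_def)
  then show ?thesis
    using inj f bij by (simp add: iso_def bij_betw_def)
qed

lemma ex_inverse_morphism:
  assumes X: "sigma_tree Sig X" and f: "iso X Y f"
  obtains g where "morphism Y X g" "bij_betw g (verts Y) (verts X)"
    "\<forall>v \<in> verts X. g (f v) = v" "\<forall>w \<in> verts Y. f (g w) = w"
proof
  define g where "g = inv_into (verts X) f"
  have bij: "bij_betw f (verts X) (verts Y)" and arcs: "emap f ` arcs X = arcs Y"
    and mf: "morphism X Y f"
    using f by (auto simp: iso_def bij_betw_def)
  show gf: "\<forall>v \<in> verts X. g (f v) = v" and "\<forall>w \<in> verts Y. f (g w) = w"
    using bij by (auto simp: g_def bij_betw_def f_inv_into_f)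
  show bij_g: "bij_betw g (verts Y) (verts X)"
    unfolding g_def by (rule bij_betw_inv_into[OF bij])
  have "emap g ` arcs Y \<subseteq> arcs X"
  proof
    fix e assume "e \<in> emap g ` arcs Y"
    then obtain u a v where "(u, a, v) \<in> arcs X" "e = emap g (emap f (u, a, v))"
      using arcs by (metis image_iff prod.exhaust)
    then show "e \<in> arcs X"
      using sigma_treeD(7)[OF X] gf by auto
  qed
  then show "morphism Y X g"
    using mf bij_g gf sigma_treeD(3,4)[OF X]
    by (auto simp: morphism_iff_graph_morphism graph_morphism_def bij_betw_def morphism_def)
qed

lemma isomorphic_refl: "isomorphic X X"
  unfolding isomorphic_def iso_def by (rule exI[of _ id]) (simp add: morphism_id)

lemma isomorphic_sym:
  assumes "sigma_tree Sig X" "sigma_tree Sig Y" "isomorphic X Y"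
  shows "isomorphic Y X"
  using assms ex_inverse_morphism iso_if_bij_morphism unfolding isomorphic_def by metis

lemma isomorphic_trans:
  assumes "sigma_tree Sig X" "sigma_tree Sig Z" "isomorphic X Y" "isomorphic Y Z"
  shows "isomorphic X Z"
proof -
  obtain f g where "iso X Y f" "iso Y Z g"
    using assms unfolding isomorphic_def by auto
  then have "morphism X Z (g \<circ> f)" "bij_betw (g \<circ> f) (verts X) (verts Z)"
    by (auto simp: iso_def intro: morphism_comp bij_betw_trans)
  then show ?thesis
    using iso_if_bij_morphism[OF assms(1,2)] unfolding isomorphic_def by blast
qed

subsection \<open>Pruned trees\<close>

text \<open>By pigeonhole \<open>h\<^sup>i = h\<^sup>j\<close> on \<open>V\<close> for some \<open>i < j\<close>; then every multiple \<open>k \<ge> i\<close> of \<open>j - i\<close>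
  has an idempotent \<open>h\<^sup>k\<close>.\<close>

lemma ex_idempotent_funpow:
  assumes fin: "finite V" and h: "h ` V \<subseteq> V"
  shows "\<exists>k > 0. \<forall>v \<in> V. (h ^^ k) ((h ^^ k) v) = (h ^^ k) v"
proof -
  have maps: "(h ^^ n) ` V \<subseteq> V" for n
    by (induction n) (use h in auto)
  define graph where "graph n = (\<lambda>v. (v, (h ^^ n) v)) ` V" for n
  have "range graph \<subseteq> Pow (V \<times> V)"
    using maps by (auto simp: graph_def)
  then have "\<not> inj graph"
    using fin finite_subset infinite_UNIV_nat finite_imageD by (metis finite_Pow_iff finite_SigmaI)
  then obtain i j where "i < j" "graph i = graph j"
    unfolding inj_def by (metis linorder_neqE_nat)
  then have ij: "(h ^^ i) v = (h ^^ j) v" if "v \<in> V" for v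
    using that by (auto simp: graph_def)
  define p where "p = j - i"
  have period: "(h ^^ (n + c * p)) v = (h ^^ n) v" if "i \<le> n" "v \<in> V" for n c v
  proof (induction c)
    case (Suc c)
    have "n + Suc c * p = (n + c * p - i) + j"
      using \<open>i < j\<close> that(1) by (simp add: p_def)
    then have "(h ^^ (n + Suc c * p)) v = (h ^^ (n + c * p - i)) ((h ^^ i) v)"
      using ij[OF that(2)] by (simp add: funpow_add)
    also have "\<dots> = (h ^^ (n + c * p)) v"
      using that(1) by (metis comp_apply funpow_add le_add_diff_inverse2 trans_le_add1)
    finally show ?case
      using Suc by simp
  qed simp
  define k where "k = Suc i * p"
  have "Suc i * 1 \<le> k"
    unfolding k_def using \<open>i < j\<close> p_def by (intro mult_le_mono2) simp
  then have "i \<le> k" "0 < k"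
    by auto
  have "(h ^^ k) ((h ^^ k) v) = (h ^^ k) v" if "v \<in> V" for v
  proof -
    have "(h ^^ k) ((h ^^ k) v) = (h ^^ (k + Suc i * p)) v"
      unfolding k_def by (simp only: funpow_add comp_apply)
    also have "\<dots> = (h ^^ k) v"
      by (rule period[OF \<open>i \<le> k\<close> that])
    finally show ?thesis .
  qed
  with \<open>0 < k\<close> show ?thesis
    by blast
qed

lemma pruned_endomorphism_inj:
  assumes fin: "finite (verts P)" and "pruned P" and h: "morphism P P h"
  shows "inj_on h (verts P)"
proof -
  have "h ` verts P \<subseteq> verts P"
    using h by (auto simp: morphism_def)
  then obtain k where k: "0 < k" "\<forall>v \<in> verts P. (h ^^ k) ((h ^^ k) v) = (h ^^ k) v"
    using ex_idempotent_funpow[OF fin] by blast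
  then have "retraction P (h ^^ k)"
    using morphism_funpow[OF h] by (simp add: retraction_def)
  then have id: "\<forall>v \<in> verts P. (h ^^ k) v = v"
    using \<open>pruned P\<close> by (simp add: pruned_def)
  have "(h ^^ k) v = (h ^^ (k - 1)) (h v)" for v
    using \<open>0 < k\<close> funpow_Suc_right[of "k - 1" h] by simp
  then show ?thesis
    using id by (metis inj_onI)
qed

lemma pruned_endomorphism_surj:
  assumes "finite (verts P)" "pruned P" "morphism P P h"
  shows "h ` verts P = verts P"
  using pruned_endomorphism_inj[OF assms] assms
  by (simp add: card_image card_subset_eq morphism_iff_graph_morphism graph_morphism_def)

lemma isomorphic_if_pruned_morphisms:
  assumes P: "sigma_tree Sig P" and Q: "sigma_tree Sig Q" and "pruned P" "pruned Q"
    and f: "morphism P Q f" and g: "morphism Q P g"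
  shows "isomorphic P Q"
proof -
  have "inj_on (g \<circ> f) (verts P)"
    using pruned_endomorphism_inj[OF sigma_treeD(1)[OF P] \<open>pruned P\<close> morphism_comp[OF f g]] .
  then have "inj_on f (verts P)"
    using inj_on_imageI2 by blast
  moreover have "f ` g ` verts Q = verts Q"
    using pruned_endomorphism_surj[OF sigma_treeD(1)[OF Q] \<open>pruned Q\<close> morphism_comp[OF g f]]
    by (simp add: image_comp)
  then have "f ` verts P = verts Q"
    using f g unfolding morphism_iff_graph_morphism graph_morphism_def
    by (metis image_mono subset_antisym)
  ultimately show ?thesis
    using iso_if_bij_morphism[OF P Q f] unfolding isomorphic_def bij_betw_def by blast
qed

lemma pruned_isomorphic:
  assumes P: "sigma_tree Sig P" and "pruned P" and "isomorphic P Y"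
  shows "pruned Y"
  unfolding pruned_def
proof (intro allI impI ballI)
  fix r w assume r: "retraction Y r" and w: "w \<in> verts Y"
  obtain f where f: "iso P Y f"
    using \<open>isomorphic P Y\<close> unfolding isomorphic_def by blast
  obtain g where g: "morphism Y P g" "\<forall>w \<in> verts Y. f (g w) = w"
    using ex_inverse_morphism[OF P f] by blast
  have mf: "morphism P Y f" and mr: "morphism Y Y r"
    using f r by (simp_all add: iso_def retraction_def)
  \<comment> \<open>transporting \<open>r\<close> along \<open>f\<close> gives a retraction of \<open>P\<close>, hence the identity\<close>
  have "retraction P (g \<circ> r \<circ> f)"
  proof -
    have "morphism P P (g \<circ> r \<circ> f)"
      using morphism_comp[OF morphism_comp[OF mf mr] g(1)] by (simp add: comp_assoc)
    moreover have "g (r (f (g (r (f v))))) = g (r (f v))" if "v \<in> verts P" for v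
      using mf mr r g(2) that by (simp add: morphism_def retraction_def)
    ultimately show ?thesis
      by (simp add: retraction_def)
  qed
  moreover have "g w \<in> verts P" "r w \<in> verts Y"
    using g(1) mr w by (auto simp: morphism_def)
  ultimately have "g (r (f (g w))) = g w"
    using \<open>pruned P\<close> unfolding pruned_def by (metis comp_apply)
  then have "f (g (r (f (g w)))) = f (g w)"
    by simp
  then show "r w = w"
    using g(2) w \<open>r w \<in> verts Y\<close> by simp
qed

subsection \<open>Retracts\<close>

lemma img_simps [simp]:
  "verts (img X f) = f ` verts X" "arcs (img X f) = emap f ` arcs X"
  "st (img X f) = f (st X)" "en (img X f) = f (en X)"
  by (simp_all add: img_def)

lemma retraction_morphisms:
  assumes "retraction X f"
  shows "morphism X (img X f) f" "morphism (img X f) X id"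
  using assms by (auto simp: retraction_def morphism_def)

lemma retraction_comp:
  assumes f: "retraction X f" and r: "retraction (img X f) r"
  shows "retraction X (r \<circ> f)"
proof -
  have "morphism X X (id \<circ> (r \<circ> f))"
    using retraction_morphisms[OF f] r by (intro morphism_comp) (auto simp: retraction_def)
  moreover have "r (f (r (f v))) = r (f v)" if "v \<in> verts X" for v
  proof -
    have "r (f v) \<in> f ` verts X"
      using r that by (auto simp: retraction_def morphism_def)
    then show ?thesis
      using f r that by (auto simp: retraction_def)
  qed
  ultimately show ?thesis
    by (simp add: retraction_def)
qed

lemma sigma_tree_img:
  assumes X: "sigma_tree Sig X" and f: "retraction X f"
  shows "sigma_tree Sig (img X f)"
proof -
  have sub: "verts (img X f) \<subseteq> verts X" "arcs (img X f) \<subseteq> arcs X"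
    using f by (auto simp: retraction_def morphism_def)
  have arcs: "emap f ` arcs X \<subseteq> arcs (img X f)"
    by simp
  have ends: "\<forall>(u, a, v) \<in> arcs (img X f). u \<in> verts (img X f) \<and> a \<in> Sig \<and> v \<in> verts (img X f)"
    using sigma_treeD(7)[OF X] by auto
  have conn: "\<forall>u \<in> verts (img X f). \<forall>v \<in> verts (img X f). (u, v) \<in> (uedges (img X f))\<^sup>*"
    using sigma_treeD(6)[OF X] by (auto intro: uedges_rtrancl_map[OF arcs])
  have "card (arcs (img X f)) + 1 = card (verts (img X f))"
    by (rule card_connected_subgraph[OF X sub _ _ conn, of "f (st X)"])
      (use ends sigma_treeD(3)[OF X] in auto)
  moreover have "(st (img X f), en (img X f)) \<in> (dedges (img X f))\<^sup>*"
    using dedges_rtrancl_map[OF arcs sigma_treeD(8)[OF X]] by simp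
  ultimately show ?thesis
    unfolding sigma_tree_def using sigma_treeD(1-4)[OF X] ends conn by auto
qed

text \<open>A retraction with the fewest image vertices has a pruned image.\<close>

lemma ex_pruned_retract:
  assumes Z: "sigma_tree Sig Z"
  shows "\<exists>R. retract_of R Z \<and> pruned R"
proof -
  have "retraction Z id"
    by (simp add: retraction_def morphism_id)
  then obtain f where f: "retraction Z f"
    and min: "\<And>g. retraction Z g \<Longrightarrow> card (f ` verts Z) \<le> card (g ` verts Z)"
    using ex_has_least_nat[of "retraction Z" id "\<lambda>g. card (g ` verts Z)"] by blast
  have "pruned (img Z f)"
    unfolding pruned_def
  proof (intro allI impI ballI, rule ccontr)
    fix r v assume r: "retraction (img Z f) r" and v: "v \<in> verts (img Z f)" and "r v \<noteq> v"
    then have "v \<notin> r ` f ` verts Z"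
      by (auto simp: retraction_def)
    moreover have "r ` f ` verts Z \<subseteq> f ` verts Z"
      using r by (auto simp: retraction_def morphism_def)
    ultimately have "card ((r \<circ> f) ` verts Z) < card (f ` verts Z)"
      using v sigma_treeD(1)[OF Z]
    by (metis image_comp img_simps(1) psubsetI psubset_card_mono finite_imageI)
    then show False
      using min[OF retraction_comp[OF f r]] by simp
  qed
  then show ?thesis
    using f unfolding retract_of_def by blast
qed

lemma prune_retract:
  assumes "sigma_tree Sig Z"
  obtains f where "retraction Z f" "prune Z = img Z f" "pruned (prune Z)"
proof -
  have "retract_of (prune Z) Z \<and> pruned (prune Z)"
    unfolding prune_def by (rule someI_ex[OF ex_pruned_retract[OF assms]])
  then show ?thesis
    using that unfolding retract_of_def by blast
qed

lemma sigma_tree_prune: "sigma_tree Sig Z \<Longrightarrow> sigma_tree Sig (prune Z)"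
  by (metis prune_retract sigma_tree_img)

lemma pruned_prune: "sigma_tree Sig Z \<Longrightarrow> pruned (prune Z)"
  by (metis prune_retract)

lemma prune_st_eq_en: "sigma_tree Sig Z \<Longrightarrow> st Z = en Z \<Longrightarrow> st (prune Z) = en (prune Z)"
  by (metis prune_retract img_simps(3,4))

subsection \<open>Homomorphic equivalence\<close>

definition homomorphic :: "'s stree \<Rightarrow> 's stree \<Rightarrow> bool" where
  "homomorphic X Y \<longleftrightarrow> (\<exists>f. morphism X Y f)"

definition hom_equiv :: "'s stree \<Rightarrow> 's stree \<Rightarrow> bool" where
  "hom_equiv X Y \<longleftrightarrow> homomorphic X Y \<and> homomorphic Y X"

lemma homomorphic_refl: "homomorphic X X"
  unfolding homomorphic_def using morphism_id by blast

lemma homomorphic_trans: "homomorphic X Y \<Longrightarrow> homomorphic Y Z \<Longrightarrow> homomorphic X Z"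
  unfolding homomorphic_def by (blast intro: morphism_comp)

lemma hom_equiv_refl: "hom_equiv X X"
  by (simp add: hom_equiv_def homomorphic_refl)

lemma hom_equiv_sym: "hom_equiv X Y \<Longrightarrow> hom_equiv Y X"
  by (simp add: hom_equiv_def)

lemma hom_equiv_trans [trans]: "hom_equiv X Y \<Longrightarrow> hom_equiv Y Z \<Longrightarrow> hom_equiv X Z"
  unfolding hom_equiv_def by (blast intro: homomorphic_trans)

lemma hom_equiv_prune:
  assumes "sigma_tree Sig Z"
  shows "hom_equiv Z (prune Z)"
proof -
  obtain f where "retraction Z f" "prune Z = img Z f"
    using prune_retract[OF assms] by blast
  then show ?thesis
    using retraction_morphisms unfolding hom_equiv_def homomorphic_def by metis
qed

lemma hom_equiv_if_isomorphic:
  assumes "sigma_tree Sig X" "sigma_tree Sig Y" "isomorphic X Y"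
  shows "hom_equiv X Y"
  using assms isomorphic_sym[OF assms]
  unfolding hom_equiv_def homomorphic_def isomorphic_def iso_def by blast

lemma isomorphic_if_pruned_hom_equiv:
  "sigma_tree Sig P \<Longrightarrow> sigma_tree Sig Q \<Longrightarrow> pruned P \<Longrightarrow> pruned Q \<Longrightarrow> hom_equiv P Q
    \<Longrightarrow> isomorphic P Q"
  using isomorphic_if_pruned_morphisms unfolding hom_equiv_def homomorphic_def by blast

subsection \<open>Isomorphism types\<close>

lemma iso_type_eq:
  assumes X: "sigma_tree Sig X" and Y: "sigma_tree Sig Y" and "isomorphic X Y"
  shows "iso_type Sig X = iso_type Sig Y"
proof -
  have "isomorphic Y X"
    by (rule isomorphic_sym[OF assms])
  then show ?thesis
    unfolding iso_type_def
    using isomorphic_trans[OF X _ \<open>isomorphic X Y\<close>]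
      isomorphic_trans[OF Y _ \<open>isomorphic Y X\<close>] by blast
qed

lemma rep_iso_type:
  assumes "sigma_tree Sig X"
  shows "sigma_tree Sig (rep (iso_type Sig X))" "isomorphic X (rep (iso_type Sig X))"
proof -
  have "X \<in> iso_type Sig X"
    using assms by (simp add: iso_type_def isomorphic_refl)
  then have "rep (iso_type Sig X) \<in> iso_type Sig X"
    unfolding rep_def by (rule someI)
  then show "sigma_tree Sig (rep (iso_type Sig X))" "isomorphic X (rep (iso_type Sig X))"
    by (simp_all add: iso_type_def)
qed

lemma rep_T1:
  assumes "A \<in> T1 Sig"
  shows "sigma_tree Sig (rep A)" "pruned (rep A)" "iso_type Sig (rep A) = A"
proof -
  obtain X where X: "sigma_tree Sig X" "pruned X" and A: "A = iso_type Sig X"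
    using assms unfolding T1_def by blast
  have R: "sigma_tree Sig (rep A)" and i: "isomorphic X (rep A)"
    using rep_iso_type[OF X(1)] A by simp_all
  show "sigma_tree Sig (rep A)"
    by (rule R)
  show "pruned (rep A)"
    by (rule pruned_isomorphic[OF X i])
  show "iso_type Sig (rep A) = A"
    using iso_type_eq[OF X(1) R i] A by simp
qed

abbreviation pruned_type :: "'s set \<Rightarrow> 's stree \<Rightarrow> 's stree set" where
  "pruned_type Sig Z \<equiv> iso_type Sig (prune Z)"

lemma pruned_type_in_T1:
  assumes "sigma_tree Sig Z"
  shows "pruned_type Sig Z \<in> T1 Sig"
  unfolding T1_def using sigma_tree_prune[OF assms] pruned_prune[OF assms] by blast

lemma hom_equiv_rep_pruned_type:
  assumes Z: "sigma_tree Sig Z"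
  shows "hom_equiv Z (rep (pruned_type Sig Z))"
proof -
  have "hom_equiv (prune Z) (rep (pruned_type Sig Z))"
    using hom_equiv_if_isomorphic[OF sigma_tree_prune[OF Z]
      rep_iso_type[OF sigma_tree_prune[OF Z]]] .
  with hom_equiv_prune[OF Z] show ?thesis
    by (rule hom_equiv_trans)
qed

lemma rep_pruned_type_st_eq_en:
  assumes Z: "sigma_tree Sig Z" and "st Z = en Z"
  shows "st (rep (pruned_type Sig Z)) = en (rep (pruned_type Sig Z))"
proof -
  obtain f where "morphism (prune Z) (rep (pruned_type Sig Z)) f"
    using rep_iso_type(2)[OF sigma_tree_prune[OF Z]] unfolding isomorphic_def iso_def by blast
  then show ?thesis
    using prune_st_eq_en[OF assms] by (auto simp: morphism_def)
qed

lemma pruned_type_cong: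
  assumes Z: "sigma_tree Sig Z" and W: "sigma_tree Sig W" and "hom_equiv Z W"
  shows "pruned_type Sig Z = pruned_type Sig W"
proof -
  have "hom_equiv (prune Z) Z"
    by (rule hom_equiv_sym[OF hom_equiv_prune[OF Z]])
  also have "hom_equiv Z W"
    by fact
  also have "hom_equiv W (prune W)"
    by (rule hom_equiv_prune[OF W])
  finally have "isomorphic (prune Z) (prune W)"
    by (rule isomorphic_if_pruned_hom_equiv[OF sigma_tree_prune[OF Z] sigma_tree_prune[OF W]
          pruned_prune[OF Z] pruned_prune[OF W]])
  then show ?thesis
    by (rule iso_type_eq[OF sigma_tree_prune[OF Z] sigma_tree_prune[OF W]])
qed

lemma pruned_type_rep:
  assumes "A \<in> T1 Sig"
  shows "pruned_type Sig (rep A) = A"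
proof -
  note R = rep_T1[OF assms]
  have "isomorphic (prune (rep A)) (rep A)"
    by (rule isomorphic_if_pruned_hom_equiv[OF sigma_tree_prune[OF R(1)] R(1)
          pruned_prune[OF R(1)] R(2)
          hom_equiv_sym[OF hom_equiv_prune[OF R(1)]]])
  then show ?thesis
    using iso_type_eq[OF sigma_tree_prune[OF R(1)] R(1)] R(3) by simp
qed

subsection \<open>The unpruned operations\<close>

definition tprod_inr :: "'s stree \<Rightarrow> 's stree \<Rightarrow> nat \<Rightarrow> nat" where
  "tprod_inr X Y = (\<lambda>v. if v = st Y then 2 * en X else 2 * v + 1)"

text \<open>The glued vertex \<open>2 * en X\<close> is even and hence read through \<open>f\<close>, which is why maps out
  of a product need \<open>f (en X) = g (st Y)\<close>.\<close>

definition tprod_case :: "(nat \<Rightarrow> nat) \<Rightarrow> (nat \<Rightarrow> nat) \<Rightarrow> nat \<Rightarrow> nat" where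
  "tprod_case f g = (\<lambda>w. if even w then f (w div 2) else g ((w - 1) div 2))"

lemma tprod_simps [simp]:
  "verts (tprod X Y) = (\<lambda>v. 2 * v) ` verts X \<union> tprod_inr X Y ` verts Y"
  "arcs (tprod X Y) = emap (\<lambda>v. 2 * v) ` arcs X \<union> emap (tprod_inr X Y) ` arcs Y"
  "st (tprod X Y) = 2 * st X" "en (tprod X Y) = tprod_inr X Y (en Y)"
  by (simp_all add: tprod_def tprod_inr_def Let_def)

lemma tprod_inr_st [simp]: "tprod_inr X Y (st Y) = 2 * en X"
  by (simp add: tprod_inr_def)

lemma inj_tprod_inr: "inj (tprod_inr X Y)"
  by (auto simp: inj_def tprod_inr_def) presburger+

lemma tprod_inr_even: "2 * u = tprod_inr X Y v \<Longrightarrow> v = st Y"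
  by (auto simp: tprod_inr_def split: if_splits) presburger

lemma graph_morphism_tprod_inl: "graph_morphism X (tprod X Y) (\<lambda>v. 2 * v)"
  by (auto simp: graph_morphism_def)

lemma graph_morphism_tprod_inr: "graph_morphism Y (tprod X Y) (tprod_inr X Y)"
  by (auto simp: graph_morphism_def)

lemma tprod_case_inl [simp]: "tprod_case f g (2 * v) = f v"
  by (simp add: tprod_case_def)

lemma tprod_case_inr:
  "f (en X) = g (st Y) \<Longrightarrow> tprod_case f g (tprod_inr X Y v) = g v"
  by (auto simp: tprod_case_def tprod_inr_def)

lemma graph_morphism_tprod_case:
  assumes f: "graph_morphism X W f" and g: "graph_morphism Y W g" and fg: "f (en X) = g (st Y)"
  shows "graph_morphism (tprod X Y) W (tprod_case f g)"
proof -
  have "tprod_case f g \<circ> (\<lambda>v. 2 * v) = f" "tprod_case f g \<circ> tprod_inr X Y = g"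
    using tprod_case_inr[of f X g Y, OF fg] by (auto simp: fun_eq_iff)
  then show ?thesis
    using f g by (simp add: graph_morphism_def image_Un image_comp emap_comp[symmetric])
qed

lemma morphism_tprod_case:
  assumes "graph_morphism X W f" "graph_morphism Y W g" "f (en X) = g (st Y)"
    and "f (st X) = st W" "g (en Y) = en W"
  shows "morphism (tprod X Y) W (tprod_case f g)"
  using graph_morphism_tprod_case[OF assms(1-3)] assms(3-5) tprod_case_inr[of f X g Y, OF assms(3)]
  by (simp add: morphism_iff_graph_morphism)

lemma homomorphic_tprod_mono:
  assumes "homomorphic X X'" "homomorphic Y Y'"
  shows "homomorphic (tprod X Y) (tprod X' Y')"
proof -
  obtain f g where f: "morphism X X' f" and g: "morphism Y Y' g"
    using assms unfolding homomorphic_def by blast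
  have "morphism (tprod X Y) (tprod X' Y') (tprod_case ((\<lambda>v. 2 * v) \<circ> f) (tprod_inr X' Y' \<circ> g))"
    using f g
    by (intro morphism_tprod_case graph_morphism_comp[OF _ graph_morphism_tprod_inl]
        graph_morphism_comp[OF _ graph_morphism_tprod_inr])
      (auto simp: morphism_iff_graph_morphism)
  then show ?thesis
    unfolding homomorphic_def by blast
qed

lemma hom_equiv_tprod_cong:
  "hom_equiv X X' \<Longrightarrow> hom_equiv Y Y' \<Longrightarrow> hom_equiv (tprod X Y) (tprod X' Y')"
  unfolding hom_equiv_def by (blast intro: homomorphic_tprod_mono)

lemma hom_equiv_tprod_assoc: "hom_equiv (tprod (tprod X Y) Z) (tprod X (tprod Y Z))"
proof -
  let ?L = "tprod (tprod X Y) Z" and ?R = "tprod X (tprod Y Z)"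
  let ?YR = "tprod_inr X (tprod Y Z) \<circ> (\<lambda>v. 2 * v)"
      and ?ZR = "tprod_inr X (tprod Y Z) \<circ> tprod_inr Y Z"
  let ?XL = "(\<lambda>v::nat. 2 * v) \<circ> (\<lambda>v. 2 * v)" and ?YL = "(\<lambda>v. 2 * v) \<circ> tprod_inr X Y"
  have XY: "(\<lambda>v. 2 * v) (en X) = ?YR (st Y)" and YZ: "?YL (en Y) = tprod_inr (tprod X Y) Z (st Z)"
    by (simp_all add: tprod_inr_def)
  have "graph_morphism (tprod X Y) ?R (tprod_case (\<lambda>v. 2 * v) ?YR)"
    by (rule graph_morphism_tprod_case[OF graph_morphism_tprod_inl
          graph_morphism_comp[OF graph_morphism_tprod_inl graph_morphism_tprod_inr] XY])
  then have "morphism ?L ?R (tprod_case (tprod_case (\<lambda>v. 2 * v) ?YR) ?ZR)"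
    by (rule morphism_tprod_case[OF _
          graph_morphism_comp[OF graph_morphism_tprod_inr graph_morphism_tprod_inr]])
      (simp_all add: tprod_case_inr[of "\<lambda>v. 2 * v" X ?YR Y, OF XY])
  moreover have "graph_morphism (tprod Y Z) ?L (tprod_case ?YL (tprod_inr (tprod X Y) Z))"
    by (rule graph_morphism_tprod_case[OF
          graph_morphism_comp[OF graph_morphism_tprod_inr graph_morphism_tprod_inl]
          graph_morphism_tprod_inr YZ])
  then have "morphism ?R ?L (tprod_case ?XL (tprod_case ?YL (tprod_inr (tprod X Y) Z)))"
    by (rule morphism_tprod_case[OF
          graph_morphism_comp[OF graph_morphism_tprod_inl graph_morphism_tprod_inl]])
      (simp_all add: tprod_case_inr[of ?YL Y "tprod_inr (tprod X Y) Z" Z, OF YZ])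
  ultimately show ?thesis
    unfolding hom_equiv_def homomorphic_def by blast
qed

lemma homomorphic_tprod_swap:
  assumes "st X = en X" "st Y = en Y"
  shows "homomorphic (tprod X Y) (tprod Y X)"
proof -
  have "morphism (tprod X Y) (tprod Y X) (tprod_case (tprod_inr Y X) (\<lambda>v. 2 * v))"
    by (rule morphism_tprod_case[OF graph_morphism_tprod_inr graph_morphism_tprod_inl])
      (use assms in \<open>simp_all add: tprod_inr_def\<close>)
  then show ?thesis
    unfolding homomorphic_def by blast
qed

lemma tprod_st_eq_en: "st X = en X \<Longrightarrow> st Y = en Y \<Longrightarrow> st (tprod X Y) = en (tprod X Y)"
  by (simp add: tprod_inr_def)

lemma tprod_connected:
  assumes X: "sigma_tree Sig X" and Y: "sigma_tree Sig Y"
  shows "\<forall>u \<in> verts (tprod X Y). \<forall>v \<in> verts (tprod X Y). (u, v) \<in> (uedges (tprod X Y))\<^sup>*"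
proof -
  let ?T = "tprod X Y" and ?i = "\<lambda>v::nat. 2 * v" and ?j = "tprod_inr X Y" and ?c = "2 * en X"
  have X_conn: "(?i u, ?i v) \<in> (uedges ?T)\<^sup>*" if "u \<in> verts X" "v \<in> verts X" for u v
    using uedges_rtrancl_map[of ?i X ?T u v] sigma_treeD(6)[OF X] that by auto
  have Y_conn: "(?j u, ?j v) \<in> (uedges ?T)\<^sup>*" if "u \<in> verts Y" "v \<in> verts Y" for u v
    using uedges_rtrancl_map[of ?j Y ?T u v] sigma_treeD(6)[OF Y] that by auto
  have "(w, ?c) \<in> (uedges ?T)\<^sup>* \<and> (?c, w) \<in> (uedges ?T)\<^sup>*" if "w \<in> verts ?T" for w
  proof -
    from that consider u where "u \<in> verts X" "w = ?i u" | u where "u \<in> verts Y" "w = ?j u"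
      by auto
    then show ?thesis
    proof cases
      case (1 u)
      then show ?thesis
        using X_conn[of u "en X"] X_conn[of "en X" u] sigma_treeD(4)[OF X] by simp
    next
      case (2 u)
      then show ?thesis
        using Y_conn[of u "st Y"] Y_conn[of "st Y" u] sigma_treeD(3)[OF Y] by simp
    qed
  qed
  then show ?thesis
    by (meson rtrancl_trans)
qed

lemma tprod_verts_Int:
  assumes "en X \<in> verts X" "st Y \<in> verts Y"
  shows "(\<lambda>v. 2 * v) ` verts X \<inter> tprod_inr X Y ` verts Y = {2 * en X}"
proof
  show "(\<lambda>v. 2 * v) ` verts X \<inter> tprod_inr X Y ` verts Y \<subseteq> {2 * en X}"
  proof
    fix w assume "w \<in> (\<lambda>v. 2 * v) ` verts X \<inter> tprod_inr X Y ` verts Y"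
    then obtain u v where "w = 2 * u" "w = tprod_inr X Y v"
      by blast
    then show "w \<in> {2 * en X}"
      using tprod_inr_even[of u X Y v] by simp
  qed
  show "{2 * en X} \<subseteq> (\<lambda>v. 2 * v) ` verts X \<inter> tprod_inr X Y ` verts Y"
    using assms tprod_inr_st[of X Y, symmetric] by blast
qed

lemma card_verts_tprod:
  assumes X: "sigma_tree Sig X" and Y: "sigma_tree Sig Y"
  shows "card (verts (tprod X Y)) + 1 = card (verts X) + card (verts Y)"
proof -
  have "card ((\<lambda>v. 2 * v) ` verts X) = card (verts X)"
    by (simp add: card_image inj_on_def)
  moreover have "card (tprod_inr X Y ` verts Y) = card (verts Y)"
    by (rule card_image[OF inj_on_subset[OF inj_tprod_inr subset_UNIV]])
  ultimately show ?thesis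
    using card_Un_Int[of "(\<lambda>v. 2 * v) ` verts X" "tprod_inr X Y ` verts Y"]
      tprod_verts_Int[OF sigma_treeD(4)[OF X] sigma_treeD(3)[OF Y]]
      sigma_treeD(1)[OF X] sigma_treeD(1)[OF Y]
    by simp
qed

text \<open>The two copies of arcs could only share a loop at the start vertex of \<open>Y\<close>.\<close>

lemma card_arcs_tprod:
  assumes X: "sigma_tree Sig X" and Y: "sigma_tree Sig Y"
  shows "card (arcs (tprod X Y)) = card (arcs X) + card (arcs Y)"
proof -
  let ?i = "\<lambda>v::nat. 2 * v" and ?j = "tprod_inr X Y"
  have "emap ?i ` arcs X \<inter> emap ?j ` arcs Y = {}"
  proof (rule ccontr)
    assume "emap ?i ` arcs X \<inter> emap ?j ` arcs Y \<noteq> {}"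
    then obtain u a v u' v' where "(u', a, v') \<in> arcs Y" "2 * u = ?j u'" "2 * v = ?j v'"
      by (auto simp: emap_def) blast
    then show False
      using tprod_inr_even sigma_tree_no_loop[OF Y] by metis
  qed
  moreover have "card (emap ?i ` arcs X) = card (arcs X)"
    by (rule card_image[OF inj_on_subset[OF inj_emap subset_UNIV]]) (simp add: inj_def)
  moreover have "card (emap ?j ` arcs Y) = card (arcs Y)"
    by (rule card_image[OF inj_on_subset[OF inj_emap[OF inj_tprod_inr] subset_UNIV]])
  ultimately show ?thesis
    using card_Un_disjoint[of "emap ?i ` arcs X" "emap ?j ` arcs Y"]
      sigma_treeD(2)[OF X] sigma_treeD(2)[OF Y]
    by simp
qed

lemma sigma_tree_tprod:
  assumes X: "sigma_tree Sig X" and Y: "sigma_tree Sig Y"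
  shows "sigma_tree Sig (tprod X Y)"
proof -
  have "\<forall>(u, a, v) \<in> arcs (tprod X Y). u \<in> verts (tprod X Y) \<and> a \<in> Sig \<and> v \<in> verts (tprod X Y)"
    using sigma_treeD(7)[OF X] sigma_treeD(7)[OF Y] by fastforce
  moreover have "(st (tprod X Y), en (tprod X Y)) \<in> (dedges (tprod X Y))\<^sup>*"
    using dedges_rtrancl_map[of "\<lambda>v. 2 * v" X "tprod X Y", OF _ sigma_treeD(8)[OF X]]
      dedges_rtrancl_map[of "tprod_inr X Y" Y "tprod X Y", OF _ sigma_treeD(8)[OF Y]]
    by simp
  ultimately show ?thesis
    unfolding sigma_tree_def
    using sigma_treeD[OF X] sigma_treeD[OF Y] tprod_connected[OF X Y] card_verts_tprod[OF X Y]
      card_arcs_tprod[OF X Y]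
    by auto
qed

lemma sigma_tree_tplus: "sigma_tree Sig X \<Longrightarrow> sigma_tree Sig (tplus X)"
  by (auto simp: sigma_tree_def tplus_def dedges_def uedges_def)

lemma sigma_tree_tstar: "sigma_tree Sig X \<Longrightarrow> sigma_tree Sig (tstar X)"
  by (auto simp: sigma_tree_def tstar_def dedges_def uedges_def)

lemma tplus_st_eq_en: "st (tplus X) = en (tplus X)"
  by (simp add: tplus_def)

lemma tstar_st_eq_en: "st (tstar X) = en (tstar X)"
  by (simp add: tstar_def)

lemma tplus_id: "st X = en X \<Longrightarrow> tplus X = X"
  by (simp add: tplus_def)

lemma tstar_id: "st X = en X \<Longrightarrow> tstar X = X"
  by (simp add: tstar_def)

subsection \<open>The pruned operations\<close>

lemma pmult_in_T1: "A \<in> T1 Sig \<Longrightarrow> B \<in> T1 Sig \<Longrightarrow> pmult Sig A B \<in> T1 Sig"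
  unfolding pmult_def by (intro pruned_type_in_T1 sigma_tree_tprod rep_T1)

lemma pplus_in_T1: "A \<in> T1 Sig \<Longrightarrow> pplus Sig A \<in> T1 Sig"
  unfolding pplus_def by (intro pruned_type_in_T1 sigma_tree_tplus rep_T1)

lemma pstar_in_T1: "A \<in> T1 Sig \<Longrightarrow> pstar Sig A \<in> T1 Sig"
  unfolding pstar_def by (intro pruned_type_in_T1 sigma_tree_tstar rep_T1)

lemma pmult_assoc:
  assumes A: "A \<in> T1 Sig" and B: "B \<in> T1 Sig" and C: "C \<in> T1 Sig"
  shows "pmult Sig (pmult Sig A B) C = pmult Sig A (pmult Sig B C)"
proof -
  let ?a = "rep A" and ?b = "rep B" and ?c = "rep C"
  have a: "sigma_tree Sig ?a" and b: "sigma_tree Sig ?b" and c: "sigma_tree Sig ?c"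
    using rep_T1(1) A B C by auto
  let ?ab = "rep (pmult Sig A B)" and ?bc = "rep (pmult Sig B C)"
  have ab: "hom_equiv (tprod ?a ?b) ?ab" and bc: "hom_equiv (tprod ?b ?c) ?bc"
    unfolding pmult_def using hom_equiv_rep_pruned_type sigma_tree_tprod a b c by blast+
  have "hom_equiv (tprod ?ab ?c) (tprod (tprod ?a ?b) ?c)"
    by (rule hom_equiv_tprod_cong[OF hom_equiv_sym[OF ab] hom_equiv_refl])
  also have "hom_equiv \<dots> (tprod ?a (tprod ?b ?c))"
    by (rule hom_equiv_tprod_assoc)
  also have "hom_equiv \<dots> (tprod ?a ?bc)"
    by (rule hom_equiv_tprod_cong[OF hom_equiv_refl bc])
  finally have "hom_equiv (tprod ?ab ?c) (tprod ?a ?bc)" .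
  moreover have "sigma_tree Sig (tprod ?ab ?c)" "sigma_tree Sig (tprod ?a ?bc)"
    using sigma_tree_tprod rep_T1(1) pmult_in_T1 A B C a c by blast+
  ultimately show ?thesis
    unfolding pmult_def[of Sig "pmult Sig A B"] pmult_def[of Sig A "pmult Sig B C"]
    by (rule pruned_type_cong[rotated 2])
qed

lemma pplus_eq_self:
  assumes "A \<in> T1 Sig" "st (rep A) = en (rep A)"
  shows "pplus Sig A = A"
  using assms by (simp add: pplus_def tplus_id pruned_type_rep)

lemma pstar_eq_self:
  assumes "A \<in> T1 Sig" "st (rep A) = en (rep A)"
  shows "pstar Sig A = A"
  using assms by (simp add: pstar_def tstar_id pruned_type_rep)

lemma rep_pplus_st_eq_en: "A \<in> T1 Sig \<Longrightarrow> st (rep (pplus Sig A)) = en (rep (pplus Sig A))"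
  unfolding pplus_def by (intro rep_pruned_type_st_eq_en sigma_tree_tplus rep_T1 tplus_st_eq_en)

lemma rep_pstar_st_eq_en: "A \<in> T1 Sig \<Longrightarrow> st (rep (pstar Sig A)) = en (rep (pstar Sig A))"
  unfolding pstar_def by (intro rep_pruned_type_st_eq_en sigma_tree_tstar rep_T1 tstar_st_eq_en)

lemma pmult_commute_if_st_eq_en:
  assumes A: "A \<in> T1 Sig" "st (rep A) = en (rep A)" and B: "B \<in> T1 Sig" "st (rep B) = en (rep B)"
  shows "pmult Sig A B = pmult Sig B A"
proof -
  have "hom_equiv (tprod (rep A) (rep B)) (tprod (rep B) (rep A))"
    using homomorphic_tprod_swap[OF A(2) B(2)] homomorphic_tprod_swap[OF B(2) A(2)]
    by (simp add: hom_equiv_def)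
  then show ?thesis
    unfolding pmult_def
    using pruned_type_cong sigma_tree_tprod rep_T1(1)[OF A(1)] rep_T1(1)[OF B(1)]
    by blast
qed

lemma gen_starplus_T1_st_eq_en:
  assumes "a \<in> gen_starplus Sig"
  shows "a \<in> T1 Sig \<and> st (rep a) = en (rep a)"
  using assms
proof induction
  case (gen_mult a b)
  then show ?case
    unfolding pmult_def
    by (intro conjI pruned_type_in_T1 rep_pruned_type_st_eq_en
       sigma_tree_tprod rep_T1 tprod_st_eq_en) auto
qed (simp_all add: pplus_in_T1 pstar_in_T1 rep_pplus_st_eq_en rep_pstar_st_eq_en)

theorem corollary4p6:
  fixes Sig :: "'s set"
  shows "(\<forall>A \<in> T1 Sig. \<forall>B \<in> T1 Sig. pmult Sig A B \<in> T1 Sig \<and> pplus Sig A \<in> T1 Sig \<and> pstar Sig A \<in> T1 Sig)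
       \<and> (\<forall>A \<in> T1 Sig. \<forall>B \<in> T1 Sig. \<forall>C \<in> T1 Sig.
            pmult Sig (pmult Sig A B) C = pmult Sig A (pmult Sig B C))
       \<and> (\<forall>A \<in> T1 Sig. pstar Sig (pstar Sig A) = pstar Sig A \<and> pplus Sig (pplus Sig A) = pplus Sig A)
       \<and> (\<forall>a \<in> gen_starplus Sig. \<forall>b \<in> gen_starplus Sig. pmult Sig a b = pmult Sig b a)"
proof (intro conjI ballI)
  fix A B C assume A: "A \<in> T1 Sig" and B: "B \<in> T1 Sig" and C: "C \<in> T1 Sig"
  show "pmult Sig A B \<in> T1 Sig" "pplus Sig A \<in> T1 Sig" "pstar Sig A \<in> T1 Sig"
    using A B by (simp_all add: pmult_in_T1 pplus_in_T1 pstar_in_T1)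
  show "pmult Sig (pmult Sig A B) C = pmult Sig A (pmult Sig B C)"
    using A B C by (rule pmult_assoc)
  show "pstar Sig (pstar Sig A) = pstar Sig A"
    using A by (intro pstar_eq_self pstar_in_T1 rep_pstar_st_eq_en)
  show "pplus Sig (pplus Sig A) = pplus Sig A"
    using A by (intro pplus_eq_self pplus_in_T1 rep_pplus_st_eq_en)
next
  fix a b assume "a \<in> gen_starplus Sig" "b \<in> gen_starplus Sig"
  then show "pmult Sig a b = pmult Sig b a"
    using gen_starplus_T1_st_eq_en pmult_commute_if_st_eq_en by blast
qed

end
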